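(* Let $A$ be a self-adjoint operator with form $\mathfrak a$. Let $u\in\mathrm{dom}(\mathfrak a)$, $v\in\mathrm{dom}(A)$ and $a,b,c>0$ such that $\mathfrak a[u]\ge a\|u\|^2$, $\|Av\|\le b\|v\|$ and $ac>b(a+b+3c)$. If $u\ne0$ or $v\ne0$, then $\mathfrak a[u+v]+c\|u+v\|^2>0$.
   Context: For a self-adjoint operator $A$ with spectral measure $E$, its form is $\mathfrak a[x,y]=\int_{\mathbb R}\mu\,d\langle E(\mu)x,y\rangle$ on $\mathrm{dom}(\mathfrak a)=\mathrm{dom}(|A|^{1/2})$, $\mathfrak a[x]:=\mathfrak a[x,x]$; for $x\in\mathrm{dom}A$, $y\in\mathrm{dom}\,\mathfrak a$ one has $\mathfrak a[x,y]=\langle Ax,y\rangle$. *)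

theory Defs
  imports "HOL-Analysis.Analysis"
begin

definition spectral_measure :: "(real set \<Rightarrow> 'a::{real_inner,complete_space} \<Rightarrow> 'a) \<Rightarrow> bool" where
  "spectral_measure E \<longleftrightarrow>
     (\<forall>S\<in>sets borel. bounded_linear (E S)) \<and>
     (\<forall>S\<in>sets borel. \<forall>x y. inner (E S x) y = inner x (E S y)) \<and>
     (\<forall>S\<in>sets borel. \<forall>T\<in>sets borel. \<forall>x. E S (E T x) = E (S \<inter> T) x) \<and>
     (\<forall>x. E UNIV x = x) \<and>
     (\<forall>F. range F \<subseteq> sets borel \<longrightarrow> disjoint_family F \<longrightarrow>
          (\<forall>x. (\<lambda>n. E (F n) x) sums E (\<Union>n. F n) x))"

text \<open>The scalar measure  S \<mapsto> <E(S)x,x> = ||E(S)x||^2.\<close>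
definition spec_meas :: "(real set \<Rightarrow> 'a::real_inner \<Rightarrow> 'a) \<Rightarrow> 'a \<Rightarrow> real measure" where
  "spec_meas E x = measure_of UNIV (sets borel) (\<lambda>S. ennreal ((norm (E S x))\<^sup>2))"

text \<open>Integral of a bounded Borel function f against the complex (here: signed) measure
  <E(.)x,z>, via polarisation.\<close>
definition spec_pair_int :: "(real set \<Rightarrow> 'a::real_inner \<Rightarrow> 'a) \<Rightarrow> (real \<Rightarrow> real) \<Rightarrow> 'a \<Rightarrow> 'a \<Rightarrow> real" where
  "spec_pair_int E f x z =
     ((LINT \<mu>|spec_meas E (x + z). f \<mu>) - (LINT \<mu>|spec_meas E (x - z). f \<mu>)) / 4"

text \<open>Truncated (bounded) operator  A_n = \<integral>_{[-n,n]} \<mu> dE(\<mu>).\<close>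
definition sa_trunc :: "(real set \<Rightarrow> 'a::real_inner \<Rightarrow> 'a) \<Rightarrow> nat \<Rightarrow> 'a \<Rightarrow> 'a" where
  "sa_trunc E n x = (THE y. \<forall>z. inner y z =
      spec_pair_int E (\<lambda>\<mu>. \<mu> * indicator {- real n..real n} \<mu>) x z)"

definition sa_op_dom :: "(real set \<Rightarrow> 'a::real_inner \<Rightarrow> 'a) \<Rightarrow> 'a set" where
  "sa_op_dom E = {x. integrable (spec_meas E x) (\<lambda>\<mu>. \<mu>\<^sup>2)}"

definition sa_op :: "(real set \<Rightarrow> 'a::{real_inner,complete_space} \<Rightarrow> 'a) \<Rightarrow> 'a \<Rightarrow> 'a" where
  "sa_op E x = lim (\<lambda>n. sa_trunc E n x)"

text \<open>Form domain dom(|A|^(1/2)):  \<integral> |\<mu>| d<E(\<mu>)x,x> < \<infinity>.\<close>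
definition sa_form_dom :: "(real set \<Rightarrow> 'a::real_inner \<Rightarrow> 'a) \<Rightarrow> 'a set" where
  "sa_form_dom E = {x. integrable (spec_meas E x) (\<lambda>\<mu>. \<mu>)}"

definition sa_form :: "(real set \<Rightarrow> 'a::real_inner \<Rightarrow> 'a) \<Rightarrow> 'a \<Rightarrow> real" where
  "sa_form E x = (LINT \<mu>|spec_meas E x. \<mu>)"

end

theory Submission
  imports Defs
begin

text \<open>By the spectral calculus, \<open>\<aa>[u+v] = \<aa>[u] + 2\<langle>Av,u\<rangle> + \<langle>Av,v\<rangle>\<close>, and Cauchy-Schwarz together with
  \<open>\<parallel>u+v\<parallel> \<ge> |\<parallel>u\<parallel> - \<parallel>v\<parallel>|\<close> bounds \<open>\<aa>[u+v] + c\<parallel>u+v\<parallel>\<^sup>2\<close> from below by the quadratic form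
  \<open>(a+c)X\<^sup>2 - 2(b+c)XY + (c-b)Y\<^sup>2\<close> in \<open>X = \<parallel>u\<parallel>, Y = \<parallel>v\<parallel>\<close>. Its discriminant condition
  \<open>(a+c)(c-b) > (b+c)\<^sup>2\<close> is exactly \<open>ac > b(a+b+3c)\<close>, so it is positive definite.
  Most of the work is the expansion of \<open>\<aa>[u+v]\<close>: the truncations \<open>A\<^sub>n\<close> are realised by a
  bounded functional calculus, built as the norm limit of spectral sums of step functions.\<close>

lemma quadratic_form_pos:
  fixes a b c X Y :: real
  assumes "a > 0" "b > 0" "c > 0" "a * c > b * (a + b + 3 * c)" "X \<ge> 0" "Y \<ge> 0" "X > 0 \<or> Y > 0"
  shows "(a + c) * X\<^sup>2 - 2 * (b + c) * X * Y + (c - b) * Y\<^sup>2 > 0"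
proof -
  define D where "D = a * c - a * b - b\<^sup>2 - 3 * b * c"
  have D: "D > 0" using assms(4) unfolding D_def by (simp add: algebra_simps power2_eq_square)
  have square: "(a + c) * ((a + c) * X\<^sup>2 - 2 * (b + c) * X * Y + (c - b) * Y\<^sup>2)
     = ((a + c) * X - (b + c) * Y)\<^sup>2 + D * Y\<^sup>2"
    unfolding D_def by (simp add: algebra_simps power2_eq_square)
  show ?thesis
  proof (cases "Y > 0")
    case True
    then have "(a + c) * ((a + c) * X\<^sup>2 - 2 * (b + c) * X * Y + (c - b) * Y\<^sup>2) > 0"
      unfolding square using D by (smt (verit) zero_le_power2 zero_less_power2 mult_pos_pos)
    moreover have "a + c > 0" using assms by simp
    ultimately show ?thesis by (simp add: zero_less_mult_iff)
  next
    case False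
    with assms have "Y = 0" "X > 0" by auto
    then show ?thesis using assms by simp
  qed
qed

lemma perturbed_form_pos:
  fixes u v w :: "'a::real_inner" and F a b c :: real
  assumes "a > 0" "b > 0" "c > 0" "a * c > b * (a + b + 3 * c)" "u \<noteq> 0 \<or> v \<noteq> 0"
    and "F \<ge> a * (norm u)\<^sup>2" and "norm w \<le> b * norm v"
  shows "F + 2 * inner w u + inner w v + c * (norm (u + v))\<^sup>2 > 0"
proof -
  define X Y where "X = norm u" and "Y = norm v"
  have CS: "\<bar>inner w z\<bar> \<le> b * Y * norm z" for z
    using Cauchy_Schwarz_ineq2[of w z] mult_right_mono[OF assms(7) norm_ge_zero[of z]]
    unfolding Y_def by linarith
  have "- (b * X * Y) \<le> inner w u" "- (b * Y\<^sup>2) \<le> inner w v"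
    using CS[of u] CS[of v] unfolding X_def Y_def by (simp_all add: abs_le_iff power2_eq_square mult_ac)
  moreover have "a * X\<^sup>2 \<le> F" using assms(6) unfolding X_def .
  moreover have "(X - Y)\<^sup>2 \<le> (norm (u + v))\<^sup>2"
    using norm_triangle_ineq3[of u "- v"] unfolding X_def Y_def
    by (metis abs_ge_zero diff_minus_eq_add norm_minus_cancel power2_abs power_mono)
  then have "c * (X - Y)\<^sup>2 \<le> c * (norm (u + v))\<^sup>2" using assms(3) by simp
  moreover have "(a + c) * X\<^sup>2 - 2 * (b + c) * X * Y + (c - b) * Y\<^sup>2 > 0"
    using assms(1-5) unfolding X_def Y_def by (intro quadratic_form_pos) auto
  ultimately show ?thesis by (simp add: power2_diff algebra_simps)
qed

lemma Cauchy_if_tail_bound: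
  fixes X :: "nat \<Rightarrow> 'a::metric_space"
  assumes "t \<longlonglongrightarrow> 0" and "\<And>N m n. N \<le> m \<Longrightarrow> N \<le> n \<Longrightarrow> dist (X m) (X n) \<le> t N"
  shows "Cauchy X"
proof (rule metric_CauchyI)
  fix e :: real assume "e > 0"
  with assms(1) have "eventually (\<lambda>N. dist (t N) 0 < e) sequentially" by (rule tendstoD)
  then obtain N where "\<forall>n\<ge>N. \<bar>t n\<bar> < e" by (auto simp: eventually_sequentially)
  then have "t N < e" by auto
  then show "\<exists>N. \<forall>m\<ge>N. \<forall>n\<ge>N. dist (X m) (X n) < e"
    using assms(2) by (meson order.strict_trans1)
qed

lemma finite_range_diff:
  assumes "finite (range g)" "finite (range h)"
  shows "finite (range (\<lambda>\<mu>. g \<mu> - h \<mu>))"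
proof (rule finite_subset)
  show "range (\<lambda>\<mu>. g \<mu> - h \<mu>) \<subseteq> (\<lambda>(s, t). s - t) ` (range g \<times> range h)" by auto
qed (use assms in auto)

lemma vimage_singleton_borel: "g \<in> borel_measurable borel \<Longrightarrow> g -` {c::real} \<in> sets borel"
  using borel_measurable_vimage[of g borel c] by simp

lemma norm_add_sq_minus_norm_diff_sq: "(norm (x + y))\<^sup>2 - (norm (x - y))\<^sup>2 = 4 * inner x (y::'a::real_inner)"
  by (simp add: power2_norm_eq_inner inner_add_left inner_add_right inner_diff_left inner_diff_right
      inner_commute[of y x])

lemma integrable_monotone_bounded:
  fixes F :: "nat \<Rightarrow> 'b \<Rightarrow> real"
  assumes "\<And>i. integrable M (F i)" "\<And>x. mono (\<lambda>i. F i x)" "\<And>i x. 0 \<le> F i x"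
    and "\<And>x. (\<lambda>i. F i x) \<longlonglongrightarrow> f x" "f \<in> borel_measurable M"
    and "\<And>i. integral\<^sup>L M (F i) \<le> B"
  shows "integrable M f"
proof (rule integral_monotone_convergence_nonneg)
  have "incseq (\<lambda>i. integral\<^sup>L M (F i))"
    using assms(1,2) by (intro monoI integral_mono) (auto dest: monoD)
  then show "(\<lambda>i. integral\<^sup>L M (F i)) \<longlonglongrightarrow> (SUP i. integral\<^sup>L M (F i))"
    using assms(6) by (intro LIMSEQ_incseq_SUP) (auto simp: bdd_above_def)
qed (use assms in auto)

subsection \<open>Step-function approximation and truncation of the identity\<close>

definition bounded_borel :: "(real \<Rightarrow> real) \<Rightarrow> bool" where
  "bounded_borel f \<longleftrightarrow> f \<in> borel_measurable borel \<and> (\<exists>K. \<forall>\<mu>. \<bar>f \<mu>\<bar> \<le> K)"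

lemma bounded_borelE:
  assumes "bounded_borel f"
  obtains K where "f \<in> borel_measurable borel" "\<And>\<mu>. \<bar>f \<mu>\<bar> \<le> K"
  using assms unfolding bounded_borel_def by blast

lemma bounded_borel_diff: "bounded_borel f \<Longrightarrow> bounded_borel g \<Longrightarrow> bounded_borel (\<lambda>\<mu>. f \<mu> - g \<mu>)"
proof -
  assume "bounded_borel f" "bounded_borel g"
  then obtain K L where f: "f \<in> borel_measurable borel" "\<And>\<mu>. \<bar>f \<mu>\<bar> \<le> K"
    and g: "g \<in> borel_measurable borel" "\<And>\<mu>. \<bar>g \<mu>\<bar> \<le> L" by (meson bounded_borelE)
  have "\<bar>f \<mu> - g \<mu>\<bar> \<le> K + L" for \<mu> using f(2)[of \<mu>] g(2)[of \<mu>] by linarith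
  with f(1) g(1) show ?thesis unfolding bounded_borel_def by auto
qed

lemma bounded_borel_finite_range:
  assumes "g \<in> borel_measurable borel" "finite (range g)"
  shows "bounded_borel g"
  unfolding bounded_borel_def
proof (intro conjI exI allI)
  fix \<mu>
  show "\<bar>g \<mu>\<bar> \<le> Max (abs ` range g)"
    using assms(2) by (intro Max_ge) auto
qed fact

definition grid_approx :: "(real \<Rightarrow> real) \<Rightarrow> nat \<Rightarrow> real \<Rightarrow> real" where
  "grid_approx f N \<mu> = of_int \<lfloor>real (Suc N) * f \<mu>\<rfloor> / real (Suc N)"

lemma grid_approx_error: "\<bar>grid_approx f N \<mu> - f \<mu>\<bar> \<le> 1 / real (Suc N)"
proof -
  define k where "k = real (Suc N)"
  have k: "k > 0" by (simp add: k_def)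
  have lower: "of_int \<lfloor>k * f \<mu>\<rfloor> \<le> k * f \<mu>" and upper: "k * f \<mu> - 1 < of_int \<lfloor>k * f \<mu>\<rfloor>"
    by linarith+
  have "f \<mu> - 1 / k = (k * f \<mu> - 1) / k" using k by (simp add: field_simps)
  also have "\<dots> \<le> of_int \<lfloor>k * f \<mu>\<rfloor> / k" using upper k by (intro divide_right_mono) auto
  finally have "f \<mu> - 1 / k \<le> of_int \<lfloor>k * f \<mu>\<rfloor> / k" .
  moreover have "of_int \<lfloor>k * f \<mu>\<rfloor> / k \<le> f \<mu>" using lower k by (simp add: divide_le_eq mult.commute)
  ultimately show ?thesis by (simp add: grid_approx_def k_def abs_le_iff)
qed

lemma grid_approx_tendsto: "(\<lambda>N. grid_approx f N \<mu>) \<longlonglongrightarrow> f \<mu>"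
proof -
  have "(\<lambda>N. grid_approx f N \<mu> - f \<mu>) \<longlonglongrightarrow> 0"
  proof (rule Lim_null_comparison)
    show "(\<lambda>N. 1 / real (Suc N)) \<longlonglongrightarrow> 0"
      by (rule LIMSEQ_Suc[OF lim_const_over_n[of 1]])
    show "\<forall>\<^sub>F N in sequentially. norm (grid_approx f N \<mu> - f \<mu>) \<le> 1 / real (Suc N)"
      by (intro always_eventually allI) (simp only: real_norm_def grid_approx_error)
  qed
  then show ?thesis by (simp add: LIM_zero_cancel)
qed

lemma borel_measurable_grid_approx [measurable]:
  assumes [measurable]: "f \<in> borel_measurable borel"
  shows "grid_approx f N \<in> borel_measurable borel"
  unfolding grid_approx_def by measurable

lemma grid_approx_bound: "(\<And>\<mu>. \<bar>f \<mu>\<bar> \<le> K) \<Longrightarrow> \<bar>grid_approx f N \<mu>\<bar> \<le> K + 1"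
proof -
  have "1 / real (Suc N) \<le> 1" by simp
  then show "\<bar>grid_approx f N \<mu>\<bar> \<le> K + 1" if "\<And>\<mu>. \<bar>f \<mu>\<bar> \<le> K"
    using grid_approx_error[of f N \<mu>] that[of \<mu>] by linarith
qed

lemma finite_range_grid_approx:
  assumes "\<And>\<mu>. \<bar>f \<mu>\<bar> \<le> K"
  shows "finite (range (grid_approx f N))"
proof -
  define k where "k = real (Suc N)"
  have "range (grid_approx f N) \<subseteq> (\<lambda>i. of_int i / k) ` {\<lfloor>- (k * K)\<rfloor> .. \<lfloor>k * K\<rfloor>}"
  proof
    fix y assume "y \<in> range (grid_approx f N)"
    then obtain \<mu> where y: "y = of_int \<lfloor>k * f \<mu>\<rfloor> / k" by (auto simp: grid_approx_def k_def)
    have "k > 0" by (simp add: k_def)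
    moreover have "- K \<le> f \<mu>" "f \<mu> \<le> K" using assms[of \<mu>] by auto
    ultimately have "- (k * K) \<le> k * f \<mu>" "k * f \<mu> \<le> k * K"
      using mult_left_mono[of "- K" "f \<mu>" k] mult_left_mono[of "f \<mu>" K k] by simp_all
    then have "\<lfloor>k * f \<mu>\<rfloor> \<in> {\<lfloor>- (k * K)\<rfloor> .. \<lfloor>k * K\<rfloor>}" by (auto intro: floor_mono)
    then show "y \<in> (\<lambda>i. of_int i / k) ` {\<lfloor>- (k * K)\<rfloor> .. \<lfloor>k * K\<rfloor>}" using y by auto
  qed
  then show ?thesis by (rule finite_subset) auto
qed

lemma bounded_borel_grid_approx:
  assumes "bounded_borel f"
  shows "grid_approx f N \<in> borel_measurable borel" "finite (range (grid_approx f N))"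
  using assms by (auto elim!: bounded_borelE intro: finite_range_grid_approx)

definition trunc_id :: "nat \<Rightarrow> real \<Rightarrow> real" where
  "trunc_id n = (\<lambda>\<mu>. \<mu> * indicator {- real n..real n} \<mu>)"

lemma borel_measurable_trunc_id [measurable]: "trunc_id n \<in> borel_measurable borel"
  unfolding trunc_id_def by measurable

lemma abs_trunc_id_le_n: "\<bar>trunc_id n \<mu>\<bar> \<le> real n"
  unfolding trunc_id_def by (auto simp: indicator_def abs_le_iff)

lemma abs_trunc_id_le: "\<bar>trunc_id n \<mu>\<bar> \<le> \<bar>\<mu>\<bar>"
  unfolding trunc_id_def by (auto simp: indicator_def)

lemma abs_trunc_id_mono: "m \<le> n \<Longrightarrow> \<bar>trunc_id m \<mu>\<bar> \<le> \<bar>trunc_id n \<mu>\<bar>"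
  unfolding trunc_id_def by (auto simp: indicator_def)

lemma bounded_borel_trunc_id: "bounded_borel (trunc_id n)"
  unfolding bounded_borel_def using abs_trunc_id_le_n by auto

lemma bounded_borel_abs_trunc_id: "bounded_borel (\<lambda>\<mu>. \<bar>trunc_id n \<mu>\<bar>)"
  unfolding bounded_borel_def using abs_trunc_id_le_n by auto

lemma trunc_id_eq: "\<bar>\<mu>\<bar> \<le> real n \<Longrightarrow> trunc_id n \<mu> = \<mu>"
  unfolding trunc_id_def by (auto simp: indicator_def abs_le_iff)

lemma eventually_trunc_id_eq: "eventually (\<lambda>n. trunc_id n \<mu> = \<mu>) sequentially"
proof -
  obtain N where "\<bar>\<mu>\<bar> \<le> real N" using real_arch_simple by blast
  then show ?thesis
    unfolding eventually_sequentially by (metis order.trans of_nat_le_iff trunc_id_eq)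
qed

lemma trunc_id_tendsto: "(\<lambda>n. trunc_id n \<mu>) \<longlonglongrightarrow> \<mu>"
  using eventually_trunc_id_eq by (rule tendsto_eventually)

lemma trunc_id_diff_sq_le_tail:
  assumes "N \<le> m" "N \<le> n"
  shows "(trunc_id m \<mu> - trunc_id n \<mu>)\<^sup>2 \<le> \<mu>\<^sup>2 * indicator {\<mu>. real N < \<bar>\<mu>\<bar>} \<mu>"
proof (cases "\<bar>\<mu>\<bar> \<le> real N")
  case True
  with assms have "\<bar>\<mu>\<bar> \<le> real m" "\<bar>\<mu>\<bar> \<le> real n" by linarith+
  then show ?thesis by (simp add: trunc_id_eq)
next
  case False
  then show ?thesis unfolding trunc_id_def by (auto simp: indicator_def power2_eq_square)
qed

subsection \<open>Spectral measures and their scalar measures\<close>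

locale spectral =
  fixes E :: "real set \<Rightarrow> 'a::{real_inner,complete_space} \<Rightarrow> 'a"
  assumes spectral_measure_E: "spectral_measure E"
begin

lemma bounded_linear_proj: "S \<in> sets borel \<Longrightarrow> bounded_linear (E S)"
  using spectral_measure_E unfolding spectral_measure_def by blast

lemma proj_self_adjoint: "S \<in> sets borel \<Longrightarrow> inner (E S x) y = inner x (E S y)"
  using spectral_measure_E unfolding spectral_measure_def by blast

lemma proj_proj: "S \<in> sets borel \<Longrightarrow> T \<in> sets borel \<Longrightarrow> E S (E T x) = E (S \<inter> T) x"
  using spectral_measure_E unfolding spectral_measure_def by blast

lemma proj_UNIV: "E UNIV x = x"
  using spectral_measure_E unfolding spectral_measure_def by blast

lemma proj_sums:
  "range F \<subseteq> sets borel \<Longrightarrow> disjoint_family F \<Longrightarrow> (\<lambda>n. E (F n) x) sums E (\<Union>n. F n) x"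
  using spectral_measure_E unfolding spectral_measure_def by blast

lemma proj_add: "S \<in> sets borel \<Longrightarrow> E S (x + y) = E S x + E S y"
  using bounded_linear_proj[THEN bounded_linear.linear] by (simp add: linear_add)

lemma proj_diff: "S \<in> sets borel \<Longrightarrow> E S (x - y) = E S x - E S y"
  using bounded_linear_proj[THEN bounded_linear.linear] by (simp add: linear_diff)

lemma proj_empty: "E {} x = 0"
proof -
  have "(\<lambda>n::nat. E {} x) sums E {} x"
    using proj_sums[of "\<lambda>_. {}" x] by (simp add: disjoint_family_on_def)
  then have "(\<lambda>n::nat. E {} x) \<longlonglongrightarrow> 0" by (simp add: sums_iff summable_LIMSEQ_zero)
  then show ?thesis using LIMSEQ_const_iff by blast
qed

lemma inner_proj_proj: "S \<in> sets borel \<Longrightarrow> inner (E S x) y = inner (E S x) (E S y)"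
  by (metis proj_self_adjoint proj_proj Int_absorb)

lemma inner_proj_self: "S \<in> sets borel \<Longrightarrow> inner (E S x) x = (norm (E S x))\<^sup>2"
  by (metis inner_proj_proj power2_norm_eq_inner)

lemma proj_orthogonal:
  "S \<in> sets borel \<Longrightarrow> T \<in> sets borel \<Longrightarrow> S \<inter> T = {} \<Longrightarrow> inner (E S x) (E T y) = 0"
  by (metis proj_empty proj_proj proj_self_adjoint inner_zero_right)

lemma norm_proj_sums:
  assumes "range F \<subseteq> sets borel" "disjoint_family F"
  shows "(\<lambda>n. (norm (E (F n) x))\<^sup>2) sums (norm (E (\<Union>n. F n) x))\<^sup>2"
proof -
  have "(\<lambda>n. \<Sum>i<n. E (F i) x) \<longlonglongrightarrow> E (\<Union>n. F n) x"
    using proj_sums[OF assms] by (simp add: sums_def)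
  then have "(\<lambda>n. (norm (\<Sum>i<n. E (F i) x))\<^sup>2) \<longlonglongrightarrow> (norm (E (\<Union>n. F n) x))\<^sup>2"
    by (intro tendsto_intros)
  moreover have "(norm (\<Sum>i<n. E (F i) x))\<^sup>2 = (\<Sum>i<n. (norm (E (F i) x))\<^sup>2)" for n
  proof (rule norm_sum_Pythagorean)
    show "pairwise (\<lambda>i j. orthogonal (E (F i) x) (E (F j) x)) {..<n}"
      using assms proj_orthogonal unfolding pairwise_def orthogonal_def disjoint_family_on_def
      by (metis UNIV_I image_subset_iff)
  qed simp
  ultimately show ?thesis by (simp add: sums_def)
qed

lemma sets_spec_meas [simp]: "sets (spec_meas E x) = sets borel"
  unfolding spec_meas_def by (simp add: sets_measure_of sets.sigma_sets_eq[of borel, simplified])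

lemma space_spec_meas [simp]: "space (spec_meas E x) = UNIV"
  unfolding spec_meas_def by (simp add: space_measure_of_conv)

lemma emeasure_spec_meas:
  "S \<in> sets borel \<Longrightarrow> emeasure (spec_meas E x) S = ennreal ((norm (E S x))\<^sup>2)"
  unfolding spec_meas_def
proof (rule emeasure_measure_of_sigma)
  show "sigma_algebra UNIV (sets borel)"
    using sets.sigma_algebra_axioms[of borel] by simp
  show "positive (sets borel) (\<lambda>S. ennreal ((norm (E S x))\<^sup>2))"
    by (simp add: positive_def proj_empty)
  show "countably_additive (sets borel) (\<lambda>S. ennreal ((norm (E S x))\<^sup>2))"
    unfolding countably_additive_def
  proof (intro allI impI)
    fix A :: "nat \<Rightarrow> real set"
    assume "range A \<subseteq> sets borel" "disjoint_family A"
    from norm_proj_sums[OF this]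
    show "(\<Sum>i. ennreal ((norm (E (A i) x))\<^sup>2)) = ennreal ((norm (E (\<Union> (range A)) x))\<^sup>2)"
      by (subst suminf_ennreal2) (auto simp: sums_iff)
  qed
qed

lemma measure_spec_meas: "S \<in> sets borel \<Longrightarrow> measure (spec_meas E x) S = (norm (E S x))\<^sup>2"
  by (simp add: measure_def emeasure_spec_meas)

lemma finite_measure_spec_meas: "finite_measure (spec_meas E x)"
  by (rule finite_measureI) (simp add: emeasure_spec_meas[of UNIV, simplified])

lemma measure_spec_meas_UNIV: "measure (spec_meas E x) UNIV = (norm x)\<^sup>2"
  by (simp add: measure_spec_meas proj_UNIV)

lemma borel_measurable_spec_meas:
  "f \<in> borel_measurable borel \<Longrightarrow> f \<in> borel_measurable (spec_meas E x)"
  by (simp add: measurable_cong_sets[OF sets_spec_meas refl])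

lemma integrable_spec_meas_bounded:
  fixes f :: "real \<Rightarrow> real"
  assumes "f \<in> borel_measurable borel" "\<And>\<mu>. \<bar>f \<mu>\<bar> \<le> K"
  shows "integrable (spec_meas E x) f"
proof (rule finite_measure.integrable_const_bound[OF finite_measure_spec_meas, of f K])
  show "AE \<mu> in spec_meas E x. norm (f \<mu>) \<le> K" using assms(2) by simp
  show "f \<in> borel_measurable (spec_meas E x)" using assms(1) by (rule borel_measurable_spec_meas)
qed

lemma integrable_spec_meas_const: "integrable (spec_meas E x) (\<lambda>\<mu>. C :: real)"
  by (rule integrable_spec_meas_bounded[of _ "\<bar>C\<bar>"]) auto

lemma integrable_spec_meas_bounded_borel:
  "bounded_borel f \<Longrightarrow> integrable (spec_meas E x) f"
  by (auto elim!: bounded_borelE intro: integrable_spec_meas_bounded)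

lemma spec_integral_dominated_convergence:
  fixes f w :: "real \<Rightarrow> real" and s :: "nat \<Rightarrow> real \<Rightarrow> real"
  assumes "f \<in> borel_measurable borel" "\<And>i. s i \<in> borel_measurable borel"
    "integrable (spec_meas E x) w" "\<And>\<mu>. (\<lambda>i. s i \<mu>) \<longlonglongrightarrow> f \<mu>" "\<And>i \<mu>. \<bar>s i \<mu>\<bar> \<le> w \<mu>"
  shows "(\<lambda>i. integral\<^sup>L (spec_meas E x) (s i)) \<longlonglongrightarrow> integral\<^sup>L (spec_meas E x) f"
proof (rule integral_dominated_convergence[where w=w])
  show "f \<in> borel_measurable (spec_meas E x)" by (rule borel_measurable_spec_meas[OF assms(1)])
  show "\<And>i. s i \<in> borel_measurable (spec_meas E x)" by (rule borel_measurable_spec_meas[OF assms(2)])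
qed (use assms in auto)

lemma spec_pair_int_diff:
  assumes "bounded_borel f" "bounded_borel g"
  shows "spec_pair_int E (\<lambda>\<mu>. f \<mu> - g \<mu>) x z = spec_pair_int E f x z - spec_pair_int E g x z"
  unfolding spec_pair_int_def
  using integrable_spec_meas_bounded_borel[OF assms(1)] integrable_spec_meas_bounded_borel[OF assms(2)]
  by (simp add: integral_diff diff_divide_distrib)

subsection \<open>Functional calculus\<close>

definition simple_fcalc :: "(real \<Rightarrow> real) \<Rightarrow> 'a \<Rightarrow> 'a" where
  "simple_fcalc g x = (\<Sum>c\<in>range g. c *\<^sub>R E (g -` {c}) x)"

lemma integral_spec_meas_comp_simple:
  fixes g :: "real \<Rightarrow> real"
  assumes g: "g \<in> borel_measurable borel" "finite (range g)"
  shows "integral\<^sup>L (spec_meas E x) (\<lambda>\<mu>. \<phi> (g \<mu>)) = (\<Sum>c\<in>range g. \<phi> c * (norm (E (g -` {c}) x))\<^sup>2)"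
proof -
  have level_sets: "\<phi> (g \<mu>) = (\<Sum>c\<in>range g. \<phi> c * indicator (g -` {c}) \<mu>)" for \<mu>
  proof -
    have "(\<Sum>c\<in>range g. \<phi> c * indicator (g -` {c}) \<mu>) = (\<Sum>c\<in>range g. if c = g \<mu> then \<phi> c else 0)"
      by (intro sum.cong) (auto simp: indicator_def)
    also have "\<dots> = \<phi> (g \<mu>)" using g(2) by (simp add: sum.delta')
    finally show ?thesis by simp
  qed
  have "integrable (spec_meas E x) (indicator (g -` {c}) :: real \<Rightarrow> real)" for c
    by (rule integrable_real_indicator) (simp_all add: vimage_singleton_borel[OF g(1)] emeasure_spec_meas)
  then have "integral\<^sup>L (spec_meas E x) (\<lambda>\<mu>. \<phi> (g \<mu>))
      = (\<Sum>c\<in>range g. \<phi> c * integral\<^sup>L (spec_meas E x) (indicator (g -` {c})))"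
    by (simp add: level_sets)
  also have "\<dots> = (\<Sum>c\<in>range g. \<phi> c * (norm (E (g -` {c}) x))\<^sup>2)"
    using vimage_singleton_borel[OF g(1)] by (intro sum.cong) (auto simp: measure_spec_meas)
  finally show ?thesis .
qed

lemma inner_simple_fcalc: "inner (simple_fcalc g x) z = (\<Sum>c\<in>range g. c * inner (E (g -` {c}) x) z)"
  unfolding simple_fcalc_def by (simp add: inner_sum_left)

lemma inner_simple_fcalc_eq_spec_pair_int:
  assumes g: "g \<in> borel_measurable borel" "finite (range g)"
  shows "inner (simple_fcalc g x) z = spec_pair_int E g x z"
proof -
  have "spec_pair_int E g x z = ((\<Sum>c\<in>range g. c * (norm (E (g -` {c}) (x + z)))\<^sup>2)
       - (\<Sum>c\<in>range g. c * (norm (E (g -` {c}) (x - z)))\<^sup>2)) / 4"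
    unfolding spec_pair_int_def using integral_spec_meas_comp_simple[OF g, of _ "\<lambda>c. c"] by simp
  also have "\<dots> = (\<Sum>c\<in>range g. c * (((norm (E (g -` {c}) x + E (g -` {c}) z))\<^sup>2
       - (norm (E (g -` {c}) x - E (g -` {c}) z))\<^sup>2) / 4))"
    using vimage_singleton_borel[OF g(1)]
    by (simp add: sum_subtractf[symmetric] sum_divide_distrib[symmetric] right_diff_distrib
        proj_add proj_diff)
  also have "\<dots> = (\<Sum>c\<in>range g. c * inner (E (g -` {c}) x) z)"
    using vimage_singleton_borel[OF g(1)]
    by (simp only: norm_add_sq_minus_norm_diff_sq inner_proj_proj[symmetric]) simp
  finally show ?thesis by (simp only: inner_simple_fcalc)
qed

lemma inner_simple_fcalc_self:
  assumes g: "g \<in> borel_measurable borel" "finite (range g)"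
  shows "inner (simple_fcalc g x) x = integral\<^sup>L (spec_meas E x) g"
  using vimage_singleton_borel[OF g(1)] integral_spec_meas_comp_simple[OF g, of x "\<lambda>c. c"]
  by (simp add: inner_simple_fcalc inner_proj_self)

lemma simple_fcalc_self_adjoint:
  assumes "g \<in> borel_measurable borel"
  shows "inner (simple_fcalc g x) z = inner x (simple_fcalc g z)"
  using vimage_singleton_borel[OF assms] unfolding simple_fcalc_def
  by (simp add: inner_sum_left inner_sum_right proj_self_adjoint)

lemma simple_fcalc_add:
  assumes "g \<in> borel_measurable borel"
  shows "simple_fcalc g (x + y) = simple_fcalc g x + simple_fcalc g y"
  unfolding simple_fcalc_def
  by (simp add: proj_add[OF vimage_singleton_borel[OF assms]] scaleR_add_right sum.distrib)

lemma simple_fcalc_diff: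
  assumes "g \<in> borel_measurable borel"
  shows "simple_fcalc g (x - y) = simple_fcalc g x - simple_fcalc g y"
  unfolding simple_fcalc_def
  by (simp add: proj_diff[OF vimage_singleton_borel[OF assms]] scaleR_diff_right sum_subtractf)

lemma norm_simple_fcalc:
  assumes g: "g \<in> borel_measurable borel" "finite (range g)"
  shows "(norm (simple_fcalc g x))\<^sup>2 = integral\<^sup>L (spec_meas E x) (\<lambda>\<mu>. (g \<mu>)\<^sup>2)"
proof -
  have "(norm (simple_fcalc g x))\<^sup>2 = (\<Sum>c\<in>range g. (norm (c *\<^sub>R E (g -` {c}) x))\<^sup>2)"
    unfolding simple_fcalc_def
  proof (rule norm_sum_Pythagorean[OF g(2)])
    show "pairwise (\<lambda>i j. orthogonal (i *\<^sub>R E (g -` {i}) x) (j *\<^sub>R E (g -` {j}) x)) (range g)"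
    proof (intro pairwiseI)
      fix i j :: real assume "i \<noteq> j"
      then have "g -` {i} \<inter> g -` {j} = {}" by auto
      then show "orthogonal (i *\<^sub>R E (g -` {i}) x) (j *\<^sub>R E (g -` {j}) x)"
        using proj_orthogonal[OF vimage_singleton_borel[OF g(1)] vimage_singleton_borel[OF g(1)]]
        by (simp add: orthogonal_def)
    qed
  qed
  also have "\<dots> = integral\<^sup>L (spec_meas E x) (\<lambda>\<mu>. (g \<mu>)\<^sup>2)"
    using integral_spec_meas_comp_simple[OF g, of x "\<lambda>c. c\<^sup>2"] by (simp add: power_mult_distrib)
  finally show ?thesis .
qed

lemma simple_fcalc_minus:
  assumes g: "g \<in> borel_measurable borel" "finite (range g)"
    and h: "h \<in> borel_measurable borel" "finite (range h)"
  shows "simple_fcalc (\<lambda>\<mu>. g \<mu> - h \<mu>) x = simple_fcalc g x - simple_fcalc h x"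
proof -
  have "(\<lambda>\<mu>. g \<mu> - h \<mu>) \<in> borel_measurable borel" using g h by measurable
  then show ?thesis
    using finite_range_diff[OF g(2) h(2)]
    by (subst vector_eq_rdot[symmetric]) (simp add: inner_diff_left inner_simple_fcalc_eq_spec_pair_int g h
        spec_pair_int_diff bounded_borel_finite_range)
qed

lemma norm_simple_fcalc_diff_le:
  assumes g: "g \<in> borel_measurable borel" "finite (range g)"
    and h: "h \<in> borel_measurable borel" "finite (range h)"
    and d: "\<And>\<mu>. \<bar>g \<mu> - h \<mu>\<bar> \<le> d"
  shows "norm (simple_fcalc g x - simple_fcalc h x) \<le> d * norm x"
proof -
  have gh: "(\<lambda>\<mu>. g \<mu> - h \<mu>) \<in> borel_measurable borel" using g h by measurable
  have "(norm (simple_fcalc g x - simple_fcalc h x))\<^sup>2 = integral\<^sup>L (spec_meas E x) (\<lambda>\<mu>. (g \<mu> - h \<mu>)\<^sup>2)"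
    using norm_simple_fcalc[OF gh finite_range_diff[OF g(2) h(2)]] by (simp add: simple_fcalc_minus g h)
  also have "\<dots> \<le> integral\<^sup>L (spec_meas E x) (\<lambda>\<mu>. d\<^sup>2)"
  proof (rule integral_mono)
    show "(g \<mu> - h \<mu>)\<^sup>2 \<le> d\<^sup>2" for \<mu>
      using power_mono[OF d[of \<mu>] abs_ge_zero, of 2] by simp
    then show "integrable (spec_meas E x) (\<lambda>\<mu>. (g \<mu> - h \<mu>)\<^sup>2)"
      using gh by (intro integrable_spec_meas_bounded[of _ "d\<^sup>2"]) auto
  qed (rule integrable_spec_meas_const)
  also have "\<dots> = (d * norm x)\<^sup>2" by (simp add: measure_spec_meas_UNIV power_mult_distrib)
  finally show ?thesis
  proof (rule power2_le_imp_le)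
    show "0 \<le> d * norm x" using order_trans[OF abs_ge_zero d[of 0]] by simp
  qed
qed

lemma Cauchy_simple_fcalc_grid_approx:
  assumes "bounded_borel f"
  shows "Cauchy (\<lambda>N. simple_fcalc (grid_approx f N) x)"
proof (rule Cauchy_if_tail_bound)
  show "(\<lambda>N. 2 / real (Suc N) * norm x) \<longlonglongrightarrow> 0"
    using LIMSEQ_Suc[OF lim_const_over_n[of 2]] by (intro tendsto_mult_left_zero) simp
  fix N m n :: nat assume "N \<le> m" "N \<le> n"
  then have "1 / real (Suc m) + 1 / real (Suc n) \<le> 2 / real (Suc N)"
    using frac_le[of 1 1 "real (Suc N)" "real (Suc m)"] frac_le[of 1 1 "real (Suc N)" "real (Suc n)"]
    by simp
  moreover have "\<bar>grid_approx f m \<mu> - grid_approx f n \<mu>\<bar> \<le> 1 / real (Suc m) + 1 / real (Suc n)" for \<mu>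
    using grid_approx_error[of f m \<mu>] grid_approx_error[of f n \<mu>] by linarith
  ultimately have "\<bar>grid_approx f m \<mu> - grid_approx f n \<mu>\<bar> \<le> 2 / real (Suc N)" for \<mu>
    by (meson order_trans)
  then show "dist (simple_fcalc (grid_approx f m) x) (simple_fcalc (grid_approx f n) x)
      \<le> 2 / real (Suc N) * norm x"
    unfolding dist_norm using bounded_borel_grid_approx[OF assms]
    by (intro norm_simple_fcalc_diff_le) auto
qed

text \<open>\<open>fcalc f\<close> is \<open>\<integral> f dE\<close> for bounded Borel \<open>f\<close>; for other \<open>f\<close> the \<open>lim\<close> is junk.\<close>

definition fcalc :: "(real \<Rightarrow> real) \<Rightarrow> 'a \<Rightarrow> 'a" where
  "fcalc f x = lim (\<lambda>N. simple_fcalc (grid_approx f N) x)"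

lemma simple_fcalc_grid_approx_tendsto:
  "bounded_borel f \<Longrightarrow> (\<lambda>N. simple_fcalc (grid_approx f N) x) \<longlonglongrightarrow> fcalc f x"
  unfolding fcalc_def using Cauchy_simple_fcalc_grid_approx Cauchy_convergent_iff convergent_LIMSEQ_iff
  by blast

lemma integral_grid_approx_tendsto:
  assumes "bounded_borel f"
  shows "(\<lambda>N. integral\<^sup>L (spec_meas E x) (grid_approx f N)) \<longlonglongrightarrow> integral\<^sup>L (spec_meas E x) f"
    and "(\<lambda>N. integral\<^sup>L (spec_meas E x) (\<lambda>\<mu>. (grid_approx f N \<mu>)\<^sup>2))
      \<longlonglongrightarrow> integral\<^sup>L (spec_meas E x) (\<lambda>\<mu>. (f \<mu>)\<^sup>2)"
proof -
  obtain K where f [measurable]: "f \<in> borel_measurable borel" and K: "\<And>\<mu>. \<bar>f \<mu>\<bar> \<le> K"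
    using bounded_borelE[OF assms] by blast
  note bound = grid_approx_bound[of f K, OF K]
  show "(\<lambda>N. integral\<^sup>L (spec_meas E x) (grid_approx f N)) \<longlonglongrightarrow> integral\<^sup>L (spec_meas E x) f"
    by (rule spec_integral_dominated_convergence[where w="\<lambda>_. K + 1"])
      (use bound grid_approx_tendsto integrable_spec_meas_const in auto)
  show "(\<lambda>N. integral\<^sup>L (spec_meas E x) (\<lambda>\<mu>. (grid_approx f N \<mu>)\<^sup>2))
      \<longlonglongrightarrow> integral\<^sup>L (spec_meas E x) (\<lambda>\<mu>. (f \<mu>)\<^sup>2)"
  proof (rule spec_integral_dominated_convergence[where w="\<lambda>_. (K + 1)\<^sup>2"])
    show "\<bar>(grid_approx f N \<mu>)\<^sup>2\<bar> \<le> (K + 1)\<^sup>2" for N \<mu>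
      using power_mono[OF bound[of N \<mu>] abs_ge_zero, of 2] by simp
  qed (auto intro: integrable_spec_meas_const tendsto_intros grid_approx_tendsto)
qed

lemma inner_fcalc_eq_spec_pair_int:
  assumes "bounded_borel f"
  shows "inner (fcalc f x) z = spec_pair_int E f x z"
proof (rule LIMSEQ_unique)
  show "(\<lambda>N. inner (simple_fcalc (grid_approx f N) x) z) \<longlonglongrightarrow> inner (fcalc f x) z"
    by (intro tendsto_intros simple_fcalc_grid_approx_tendsto[OF assms])
  show "(\<lambda>N. inner (simple_fcalc (grid_approx f N) x) z) \<longlonglongrightarrow> spec_pair_int E f x z"
    unfolding inner_simple_fcalc_eq_spec_pair_int[OF bounded_borel_grid_approx[OF assms]]
      spec_pair_int_def
    by (intro tendsto_intros integral_grid_approx_tendsto[OF assms]) simp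
qed

lemma norm_fcalc:
  assumes "bounded_borel f"
  shows "(norm (fcalc f x))\<^sup>2 = integral\<^sup>L (spec_meas E x) (\<lambda>\<mu>. (f \<mu>)\<^sup>2)"
proof (rule LIMSEQ_unique)
  show "(\<lambda>N. (norm (simple_fcalc (grid_approx f N) x))\<^sup>2) \<longlonglongrightarrow> (norm (fcalc f x))\<^sup>2"
    by (intro tendsto_intros simple_fcalc_grid_approx_tendsto[OF assms])
  show "(\<lambda>N. (norm (simple_fcalc (grid_approx f N) x))\<^sup>2) \<longlonglongrightarrow> integral\<^sup>L (spec_meas E x) (\<lambda>\<mu>. (f \<mu>)\<^sup>2)"
    unfolding norm_simple_fcalc[OF bounded_borel_grid_approx[OF assms]]
    by (rule integral_grid_approx_tendsto[OF assms])
qed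

lemma inner_fcalc_self:
  assumes "bounded_borel f"
  shows "inner (fcalc f x) x = integral\<^sup>L (spec_meas E x) f"
proof (rule LIMSEQ_unique)
  show "(\<lambda>N. inner (simple_fcalc (grid_approx f N) x) x) \<longlonglongrightarrow> inner (fcalc f x) x"
    by (intro tendsto_intros simple_fcalc_grid_approx_tendsto[OF assms])
  show "(\<lambda>N. inner (simple_fcalc (grid_approx f N) x) x) \<longlonglongrightarrow> integral\<^sup>L (spec_meas E x) f"
    unfolding inner_simple_fcalc_self[OF bounded_borel_grid_approx[OF assms]]
    by (rule integral_grid_approx_tendsto[OF assms])
qed

lemma fcalc_self_adjoint:
  assumes "bounded_borel f"
  shows "inner (fcalc f x) z = inner x (fcalc f z)"
proof (rule LIMSEQ_unique)
  show "(\<lambda>N. inner (simple_fcalc (grid_approx f N) x) z) \<longlonglongrightarrow> inner (fcalc f x) z"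
    by (intro tendsto_intros simple_fcalc_grid_approx_tendsto[OF assms])
  show "(\<lambda>N. inner (simple_fcalc (grid_approx f N) x) z) \<longlonglongrightarrow> inner x (fcalc f z)"
    unfolding simple_fcalc_self_adjoint[OF bounded_borel_grid_approx(1)[OF assms]]
    by (intro tendsto_intros simple_fcalc_grid_approx_tendsto[OF assms])
qed

lemma fcalc_add:
  assumes "bounded_borel f"
  shows "fcalc f (x + y) = fcalc f x + fcalc f y"
proof (rule LIMSEQ_unique)
  show "(\<lambda>N. simple_fcalc (grid_approx f N) (x + y)) \<longlonglongrightarrow> fcalc f (x + y)"
    by (rule simple_fcalc_grid_approx_tendsto[OF assms])
  show "(\<lambda>N. simple_fcalc (grid_approx f N) (x + y)) \<longlonglongrightarrow> fcalc f x + fcalc f y"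
    unfolding simple_fcalc_add[OF bounded_borel_grid_approx(1)[OF assms]]
    by (intro tendsto_intros simple_fcalc_grid_approx_tendsto[OF assms])
qed

lemma fcalc_diff:
  assumes "bounded_borel f"
  shows "fcalc f (x - y) = fcalc f x - fcalc f y"
proof (rule LIMSEQ_unique)
  show "(\<lambda>N. simple_fcalc (grid_approx f N) (x - y)) \<longlonglongrightarrow> fcalc f (x - y)"
    by (rule simple_fcalc_grid_approx_tendsto[OF assms])
  show "(\<lambda>N. simple_fcalc (grid_approx f N) (x - y)) \<longlonglongrightarrow> fcalc f x - fcalc f y"
    unfolding simple_fcalc_diff[OF bounded_borel_grid_approx(1)[OF assms]]
    by (intro tendsto_intros simple_fcalc_grid_approx_tendsto[OF assms])
qed

lemma fcalc_minus:
  assumes "bounded_borel f" "bounded_borel g"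
  shows "fcalc (\<lambda>\<mu>. f \<mu> - g \<mu>) x = fcalc f x - fcalc g x"
  by (subst vector_eq_rdot[symmetric]) (simp add: inner_fcalc_eq_spec_pair_int assms bounded_borel_diff
      spec_pair_int_diff inner_diff_left)

subsection \<open>The operator and its form\<close>

lemma sa_trunc_eq_fcalc: "sa_trunc E n x = fcalc (trunc_id n) x"
proof -
  have "sa_trunc E n x = (THE y. \<forall>z. inner y z = spec_pair_int E (trunc_id n) x z)"
    unfolding sa_trunc_def trunc_id_def by (rule refl)
  also have "\<dots> = fcalc (trunc_id n) x"
  proof (rule the_equality)
    fix y assume "\<forall>z. inner y z = spec_pair_int E (trunc_id n) x z"
    then show "y = fcalc (trunc_id n) x"
      by (subst vector_eq_rdot[symmetric]) (simp add: inner_fcalc_eq_spec_pair_int bounded_borel_trunc_id)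
  qed (simp add: inner_fcalc_eq_spec_pair_int bounded_borel_trunc_id)
  finally show ?thesis .
qed

lemma spec_integral_add:
  assumes "bounded_borel g"
  shows "integral\<^sup>L (spec_meas E (x + y)) g
    = integral\<^sup>L (spec_meas E x) g + 2 * inner (fcalc g y) x + integral\<^sup>L (spec_meas E y) g"
  using fcalc_self_adjoint[OF assms, of x y]
  by (simp add: inner_fcalc_self[OF assms, symmetric] fcalc_add[OF assms] inner_add_left
      inner_add_right inner_commute)

lemma spec_integral_parallelogram:
  assumes "bounded_borel g"
  shows "integral\<^sup>L (spec_meas E (x + y)) g + integral\<^sup>L (spec_meas E (x - y)) g
    = 2 * integral\<^sup>L (spec_meas E x) g + 2 * integral\<^sup>L (spec_meas E y) g"
  by (simp add: inner_fcalc_self[OF assms, symmetric] fcalc_add[OF assms] fcalc_diff[OF assms]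
      inner_add_left inner_add_right inner_diff_left inner_diff_right)

lemma sa_form_tendsto:
  assumes "x \<in> sa_form_dom E"
  shows "(\<lambda>n. integral\<^sup>L (spec_meas E x) (trunc_id n)) \<longlonglongrightarrow> sa_form E x"
  unfolding sa_form_def
proof (rule spec_integral_dominated_convergence[where w="\<lambda>\<mu>. \<bar>\<mu>\<bar>"])
  show "integrable (spec_meas E x) (\<lambda>\<mu>. \<bar>\<mu>\<bar>)"
    using assms unfolding sa_form_dom_def by auto
qed (auto simp: trunc_id_tendsto abs_trunc_id_le)

lemma sa_op_dom_subset_form_dom: "sa_op_dom E \<subseteq> sa_form_dom E"
proof
  fix x assume "x \<in> sa_op_dom E"
  then have "integrable (spec_meas E x) (\<lambda>\<mu>. 1 + \<mu>\<^sup>2)"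
    using integrable_spec_meas_const[of x 1] unfolding sa_op_dom_def by auto
  then have "integrable (spec_meas E x) (\<lambda>\<mu>. \<mu>)"
  proof (rule Bochner_Integration.integrable_bound)
    show "(\<lambda>\<mu>. \<mu>) \<in> borel_measurable (spec_meas E x)"
      by (rule borel_measurable_spec_meas) simp
    have "\<bar>\<mu>\<bar> \<le> 1 + \<mu>\<^sup>2" for \<mu> :: real
      using zero_le_power2[of "\<bar>\<mu>\<bar> - 1"] by (simp add: power2_eq_square algebra_simps)
    then show "AE \<mu> in spec_meas E x. norm \<mu> \<le> norm (1 + \<mu>\<^sup>2)" by simp
  qed
  then show "x \<in> sa_form_dom E" unfolding sa_form_dom_def by simp
qed

lemma tail_integral_tendsto_zero:
  assumes "integrable (spec_meas E x) (\<lambda>\<mu>. \<mu>\<^sup>2)"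
  shows "(\<lambda>N. integral\<^sup>L (spec_meas E x) (\<lambda>\<mu>. \<mu>\<^sup>2 * indicator {\<mu>. real N < \<bar>\<mu>\<bar>} \<mu>)) \<longlonglongrightarrow> 0"
proof -
  have "(\<lambda>N. integral\<^sup>L (spec_meas E x) (\<lambda>\<mu>. \<mu>\<^sup>2 * indicator {\<mu>. real N < \<bar>\<mu>\<bar>} \<mu>))
      \<longlonglongrightarrow> integral\<^sup>L (spec_meas E x) (\<lambda>\<mu>. 0)"
  proof (rule spec_integral_dominated_convergence[where w="\<lambda>\<mu>. \<mu>\<^sup>2"])
    fix \<mu> :: real
    obtain N where "\<bar>\<mu>\<bar> \<le> real N" using real_arch_simple by blast
    then have "eventually (\<lambda>i. \<mu>\<^sup>2 * indicator {\<mu>. real i < \<bar>\<mu>\<bar>} \<mu> = 0) sequentially"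
      unfolding eventually_sequentially
      by (metis (no_types, lifting) indicator_simps(2) mem_Collect_eq mult_zero_right of_nat_le_iff
          order.trans not_less)
    then show "(\<lambda>i. \<mu>\<^sup>2 * indicator {\<mu>. real i < \<bar>\<mu>\<bar>} \<mu>) \<longlonglongrightarrow> 0"
      by (rule tendsto_eventually)
  qed (use assms in \<open>auto simp: indicator_def\<close>)
  then show ?thesis by simp
qed

lemma sa_trunc_tendsto:
  assumes "v \<in> sa_op_dom E"
  shows "(\<lambda>n. sa_trunc E n v) \<longlonglongrightarrow> sa_op E v"
proof -
  have sq: "integrable (spec_meas E v) (\<lambda>\<mu>. \<mu>\<^sup>2)" using assms unfolding sa_op_dom_def by simp
  define tail where "tail N = integral\<^sup>L (spec_meas E v) (\<lambda>\<mu>. \<mu>\<^sup>2 * indicator {\<mu>. real N < \<bar>\<mu>\<bar>} \<mu>)"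
    for N
  have "Cauchy (\<lambda>n. sa_trunc E n v)"
  proof (rule Cauchy_if_tail_bound)
    show "(\<lambda>N. sqrt (tail N)) \<longlonglongrightarrow> 0"
      using tendsto_real_sqrt[OF tail_integral_tendsto_zero[OF sq]] unfolding tail_def by simp
    fix N m n :: nat assume "N \<le> m" "N \<le> n"
    have "(dist (sa_trunc E m v) (sa_trunc E n v))\<^sup>2
        = integral\<^sup>L (spec_meas E v) (\<lambda>\<mu>. (trunc_id m \<mu> - trunc_id n \<mu>)\<^sup>2)"
      by (simp add: dist_norm sa_trunc_eq_fcalc fcalc_minus[symmetric] norm_fcalc bounded_borel_diff
          bounded_borel_trunc_id)
    also have "\<dots> \<le> tail N"
      unfolding tail_def
    proof (rule integral_mono)
      show "integrable (spec_meas E v) (\<lambda>\<mu>. \<mu>\<^sup>2 * indicator {\<mu>. real N < \<bar>\<mu>\<bar>} \<mu>)"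
        by (rule Bochner_Integration.integrable_bound[OF sq])
          (auto intro!: borel_measurable_spec_meas simp: indicator_def)
      show "integrable (spec_meas E v) (\<lambda>\<mu>. (trunc_id m \<mu> - trunc_id n \<mu>)\<^sup>2)"
      proof (rule integrable_spec_meas_bounded[of _ "(real m + real n)\<^sup>2"])
        fix \<mu>
        have "\<bar>trunc_id m \<mu> - trunc_id n \<mu>\<bar> \<le> real m + real n"
          using abs_trunc_id_le_n[of m \<mu>] abs_trunc_id_le_n[of n \<mu>] by linarith
        from power_mono[OF this abs_ge_zero, of 2]
        show "\<bar>(trunc_id m \<mu> - trunc_id n \<mu>)\<^sup>2\<bar> \<le> (real m + real n)\<^sup>2" by simp
      qed simp
    qed (rule trunc_id_diff_sq_le_tail[OF \<open>N \<le> m\<close> \<open>N \<le> n\<close>])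
    finally show "dist (sa_trunc E m v) (sa_trunc E n v) \<le> sqrt (tail N)"
      by (simp add: real_le_rsqrt)
  qed
  then show ?thesis
    unfolding sa_op_def using Cauchy_convergent_iff convergent_LIMSEQ_iff by blast
qed

lemma sa_form_dom_add:
  assumes x: "x \<in> sa_form_dom E" and y: "y \<in> sa_form_dom E"
  shows "x + y \<in> sa_form_dom E"
proof -
  have abs_integrable: "integrable (spec_meas E z) (\<lambda>\<mu>. \<bar>\<mu>\<bar>)" if "z \<in> sa_form_dom E" for z
    using that unfolding sa_form_dom_def by auto
  let ?B = "2 * integral\<^sup>L (spec_meas E x) (\<lambda>\<mu>. \<bar>\<mu>\<bar>) + 2 * integral\<^sup>L (spec_meas E y) (\<lambda>\<mu>. \<bar>\<mu>\<bar>)"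
  have le: "integral\<^sup>L (spec_meas E z) (\<lambda>\<mu>. \<bar>trunc_id i \<mu>\<bar>) \<le> integral\<^sup>L (spec_meas E z) (\<lambda>\<mu>. \<bar>\<mu>\<bar>)"
    if "z \<in> sa_form_dom E" for z i
    by (rule integral_mono[OF integrable_spec_meas_bounded_borel[OF bounded_borel_abs_trunc_id]
        abs_integrable[OF that] abs_trunc_id_le])
  have bound: "integral\<^sup>L (spec_meas E (x + y)) (\<lambda>\<mu>. \<bar>trunc_id i \<mu>\<bar>) \<le> ?B" for i
  proof -
    have "0 \<le> integral\<^sup>L (spec_meas E (x - y)) (\<lambda>\<mu>. \<bar>trunc_id i \<mu>\<bar>)" by simp
    then show ?thesis
      using spec_integral_parallelogram[OF bounded_borel_abs_trunc_id, of x y i] le[OF x, of i] le[OF y, of i]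
      by linarith
  qed
  have "integrable (spec_meas E (x + y)) (\<lambda>\<mu>. \<bar>\<mu>\<bar>)"
  proof (rule integrable_monotone_bounded[OF _ _ _ _ _ bound])
    show "integrable (spec_meas E (x + y)) (\<lambda>\<mu>. \<bar>trunc_id i \<mu>\<bar>)" for i
      by (rule integrable_spec_meas_bounded_borel[OF bounded_borel_abs_trunc_id])
    show "mono (\<lambda>i. \<bar>trunc_id i \<mu>\<bar>)" for \<mu> by (intro monoI abs_trunc_id_mono)
    show "(\<lambda>i. \<bar>trunc_id i \<mu>\<bar>) \<longlonglongrightarrow> \<bar>\<mu>\<bar>" for \<mu> by (intro tendsto_intros trunc_id_tendsto)
    show "(\<lambda>\<mu>. \<bar>\<mu>\<bar>) \<in> borel_measurable (spec_meas E (x + y))"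
      by (rule borel_measurable_spec_meas) simp
  qed simp
  then show ?thesis
    unfolding sa_form_dom_def by (simp add: integrable_abs_iff borel_measurable_spec_meas)
qed

lemma sa_form_add_op_dom:
  assumes x: "x \<in> sa_form_dom E" and v: "v \<in> sa_op_dom E"
  shows "sa_form E (x + v) = sa_form E x + 2 * inner (sa_op E v) x + sa_form E v"
proof (rule LIMSEQ_unique)
  have "v \<in> sa_form_dom E" using v sa_op_dom_subset_form_dom by blast
  then show "(\<lambda>n. integral\<^sup>L (spec_meas E (x + v)) (trunc_id n))
      \<longlonglongrightarrow> sa_form E x + 2 * inner (sa_op E v) x + sa_form E v"
    unfolding spec_integral_add[OF bounded_borel_trunc_id] sa_trunc_eq_fcalc[symmetric]
    by (intro tendsto_intros sa_form_tendsto sa_trunc_tendsto x v)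
  show "(\<lambda>n. integral\<^sup>L (spec_meas E (x + v)) (trunc_id n)) \<longlonglongrightarrow> sa_form E (x + v)"
    using x \<open>v \<in> sa_form_dom E\<close> by (intro sa_form_tendsto sa_form_dom_add)
qed

lemma sa_form_op_dom:
  assumes "v \<in> sa_op_dom E"
  shows "sa_form E v = inner (sa_op E v) v"
proof (rule LIMSEQ_unique)
  show "(\<lambda>n. integral\<^sup>L (spec_meas E v) (trunc_id n)) \<longlonglongrightarrow> sa_form E v"
    using assms sa_op_dom_subset_form_dom by (intro sa_form_tendsto) blast
  show "(\<lambda>n. integral\<^sup>L (spec_meas E v) (trunc_id n)) \<longlonglongrightarrow> inner (sa_op E v) v"
    unfolding inner_fcalc_self[OF bounded_borel_trunc_id, symmetric] sa_trunc_eq_fcalc[symmetric]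
    by (intro tendsto_intros sa_trunc_tendsto assms)
qed

end

theorem lemma2p6:
  fixes E :: "real set \<Rightarrow> 'a::{real_inner,complete_space} \<Rightarrow> 'a"
    and u v :: 'a and a b c :: real
  assumes "spectral_measure E"
    and "u \<in> sa_form_dom E" and "v \<in> sa_op_dom E"
    and "a > 0" and "b > 0" and "c > 0"
    and "sa_form E u \<ge> a * (norm u)\<^sup>2"
    and "norm (sa_op E v) \<le> b * norm v"
    and "a * c > b * (a + b + 3 * c)"
    and "u \<noteq> 0 \<or> v \<noteq> 0"
  shows "sa_form E (u + v) + c * (norm (u + v))\<^sup>2 > 0"
proof -
  interpret spectral E by (rule spectral.intro) fact
  have "sa_form E (u + v) = sa_form E u + 2 * inner (sa_op E v) u + inner (sa_op E v) v"
    using sa_form_add_op_dom[OF assms(2,3)] sa_form_op_dom[OF assms(3)] by simp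
  with perturbed_form_pos[OF assms(4-6,9,10,7,8)] show ?thesis by simp
qed

end
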